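(* Let $X$ be any real random variable, and let $s_1,s_2$ be real numbers with $s_1\le 0\le s_2$ such that $\mathsf{E}\, e^{sX}<\infty$ for all $s\in[s_1,s_2]$. Let $p>0$ and $\ell:=\lceil p-1\rceil$. Then for any $s\in(0,s_2]$ and any $j\in\{-1,0,1,\dots,\ell\}$ such that $\mathsf{E}|X|^{j_+}<\infty$ (with $j_+=\max(j,0)$ and the convention $0^0:=1$), one has \[ \mathsf{E}\, X_+^p=\frac{\Gamma(p+1)}{2\pi}\int_{-\infty}^{\infty}\frac{\mathsf{E}\, e_j\big((s+it)X\big)}{(s+it)^{p+1}}\,dt =\frac{\Gamma(p+1)}{\pi}\int_{0}^{\infty}\operatorname{Re}\frac{\mathsf{E}\, e_j\big((s+it)X\big)}{(s+it)^{p+1}}\,dt, \] where both integrals exist in the Lebesgue sense.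
   Context: $x_+:=\max(0,x)$ and $x_+^p:=(x_+)^p$. For complex $z$ and $m\in\{-1,0,1,\dots\}$, $e_m(z):=e^z-\sum_{j=0}^m z^j/j!$ (an empty sum is $0$, so $e_{-1}(z)=e^z$). For $z$ with $\operatorname{Re} z>0$, $z^{p+1}$ denotes the principal branch $\exp((p+1)\operatorname{Log} z)$. The statement "the identity holds" includes the assertion that the integrals exist in the Lebesgue sense (possibly infinite). *)

theory Defs
  imports "HOL-Probability.Probability"
begin

definition exp_trunc :: "int \<Rightarrow> complex \<Rightarrow> complex" where
  "exp_trunc m z = exp z - (\<Sum>k<nat (m + 1). z ^ k / of_nat (fact k))"

end

theory Submission
  imports Defs "HOL-Analysis.Generalised_Binomial_Theorem"
begin

text \<open>
  For \<open>a > 1\<close> and \<open>s > 0\<close> the function \<open>H y = y\<^sub>+ powr (a - 1) * exp (- s * y)\<close> is integrable,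
  bounded and continuous, and its Fourier transform at \<open>t\<close> is \<open>Gamma a / (s + i t) powr a\<close>: this is
  the Laplace transform of the Gamma kernel at the complex point \<open>s + i t\<close>, obtained by expanding the
  exponential around a real point and summing a binomial series. Fourier inversion at a continuity point
  (proved by Gaussian mollification) therefore gives
  \<open>\<integral> exp ((s + i t) x) / (s + i t) powr a dt = 2 pi x\<^sub>+ powr (a - 1) / Gamma a\<close>.
  The Taylor terms removed in \<open>exp_trunc j\<close> are instances of the same formula at \<open>x = 0\<close> with
  exponent \<open>p + 1 - k > 1\<close>, so they integrate to zero. The exponential moment and the moments of
  order at most \<open>j\<close> dominate the integrand by an integrable function on \<open>M \<times> \<real>\<close>, so expectation and
  \<open>t\<close>-integral may be exchanged; the integrand at \<open>-t\<close> is the conjugate of the one at \<open>t\<close>, which gives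
  the half-line form.
\<close>

section \<open>Laplace transform of the Gamma kernel\<close>

lemma laplace_powr_real:
  fixes b c :: real assumes b: "b > 0" and c: "c > 0"
  shows "integrable lborel (\<lambda>y. max 0 y powr (b - 1) * exp (- c * y))"
    and "(LINT y|lborel. max 0 y powr (b - 1) * exp (- c * y)) = Gamma b / c powr b"
proof -
  define g where "g = (\<lambda>t::real. indicator {0..} t * t powr (b - 1) / exp t)"
  have "(\<integral>\<^sup>+t. ennreal (g t) \<partial>lborel) = ennreal (Gamma b)"
    using Gamma_conv_nn_integral_real[OF b] unfolding g_def by simp
  then have g_int: "integrable lborel g" and g_val: "integral\<^sup>L lborel g = Gamma b"
    using nn_integral_eq_integrable[of g lborel "Gamma b"] b
    by (auto simp: g_def intro!: less_imp_le)
  have scaled: "g (0 + c * y) = c powr (b - 1) * (max 0 y powr (b - 1) * exp (- c * y))" for y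
    using c by (cases "y \<ge> 0")
      (auto simp: g_def powr_mult exp_minus field_simps max_def indicator_def zero_le_mult_iff)
  have "integrable lborel (\<lambda>y. g (0 + c * y))"
    using lborel_integrable_real_affine[OF g_int, of c 0] c by simp
  then have "integrable lborel (\<lambda>y. c powr (b - 1) * (max 0 y powr (b - 1) * exp (- c * y)))"
    unfolding scaled .
  then show "integrable lborel (\<lambda>y. max 0 y powr (b - 1) * exp (- c * y))"
    using c by simp
  have "Gamma b = c * (LINT y|lborel. c powr (b - 1) * (max 0 y powr (b - 1) * exp (- c * y)))"
    using lborel_integral_real_affine[of c g 0] c g_val unfolding scaled by simp
  also have "\<dots> = (c * c powr (b - 1)) * (LINT y|lborel. max 0 y powr (b - 1) * exp (- c * y))"
    by (simp only: integral_mult_right_zero mult.assoc)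
  also have "c * c powr (b - 1) = c powr b"
    using c by (simp add: powr_diff)
  finally show "(LINT y|lborel. max 0 y powr (b - 1) * exp (- c * y)) = Gamma b / c powr b"
    using c by (simp add: field_simps)
qed

lemma Gamma_add_nat_eq_gbinomial:
  fixes a c :: real and d :: complex and n :: nat
  assumes a: "a > 0" and c: "c > 0"
  shows "of_real (Gamma (a + n) / c powr (a + n)) * ((- d) ^ n / fact n)
    = of_real (Gamma a * c powr (- a)) * (((- of_real a) gchoose n) * (d / of_real c) ^ n)"
proof -
  have Gamma_a: "Gamma a > 0" using a by (rule Gamma_real_pos)
  have "pochhammer a n = Gamma (a + n) / Gamma a"
    using pochhammer_Gamma[of a n] a by (auto simp: nonpos_Ints_def)
  then have gbin: "((- complex_of_real a) gchoose n) = (- 1) ^ n * of_real (Gamma (a + n) / Gamma a) / fact n"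
    by (simp add: gbinomial_pochhammer pochhammer_of_real)
  have "Gamma (a + n) / c powr (a + n) = Gamma a * c powr (- a) * (Gamma (a + n) / Gamma a) / c ^ n"
    using Gamma_a c by (simp add: powr_add powr_realpow powr_minus field_simps)
  then show ?thesis
    unfolding gbin by (simp add: power_minus[of d] field_simps)
qed

lemma complex_powr_real_split:
  fixes c :: real and d :: complex
  assumes c: "c > 0"
  shows "(of_real c + d) powr of_real b = of_real (c powr b) * (1 + d / of_real c) powr of_real b"
proof -
  have split: "of_real c + d = of_real c * (1 + d / of_real c)"
    using c by (simp add: field_simps)
  have "(of_real c + d) powr of_real b = of_real c powr of_real b * (1 + d / of_real c) powr of_real b"
    by (subst split, rule powr_times_real_left) (use c in auto)
  then show ?thesis
    using powr_of_real[of c b] c by simp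
qed

lemma laplace_kernel_series:
  fixes a c y :: real and d :: complex
  defines "f \<equiv> \<lambda>n. of_real (max 0 y powr (a + n - 1) * exp (- c * y)) * ((- d) ^ n / fact n)"
  shows "f sums (of_real (max 0 y powr (a - 1)) * exp (- ((of_real c + d) * of_real y)))"
    and "(\<Sum>n<N. norm (f n)) \<le> max 0 y powr (a - 1) * exp (- (c - cmod d) * y)"
proof -
  have "max 0 y powr (a + n - 1) = max 0 y powr (a - 1) * y ^ n" if "y \<ge> 0" for n :: nat
    using that by (cases "y = 0") (auto simp: max_def powr_add[symmetric] powr_realpow[symmetric] algebra_simps)
  then have f_eq: "f = (\<lambda>n. of_real (max 0 y powr (a - 1) * exp (- c * y)) * ((- d * of_real y) ^ n /\<^sub>R fact n))"
    if "y \<ge> 0"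
    using that by (simp add: f_def fun_eq_iff power_mult_distrib power_minus[of d] power_minus[of "d * _"]
        scaleR_conv_of_real divide_inverse mult_ac)
  show "f sums (of_real (max 0 y powr (a - 1)) * exp (- ((of_real c + d) * of_real y)))"
  proof (cases "y \<ge> 0")
    case True
    have "(\<lambda>n. of_real (max 0 y powr (a - 1) * exp (- c * y)) * ((- d * of_real y) ^ n /\<^sub>R fact n))
        sums (of_real (max 0 y powr (a - 1) * exp (- c * y)) * exp (- d * of_real y))"
      by (intro sums_mult exp_converges)
    then show ?thesis
      using True unfolding f_eq[OF True] by (simp add: exp_add[symmetric] exp_of_real[symmetric] algebra_simps)
  qed (simp add: f_def)
  show "(\<Sum>n<N. norm (f n)) \<le> max 0 y powr (a - 1) * exp (- (c - cmod d) * y)"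
  proof (cases "y \<ge> 0")
    case True
    have "(\<Sum>n<N. norm (f n))
        = max 0 y powr (a - 1) * exp (- c * y) * (\<Sum>n<N. (cmod d * y) ^ n /\<^sub>R fact n)"
      using True unfolding f_eq[OF True] by (simp add: norm_mult norm_power sum_distrib_left mult_ac)
    also have "\<dots> \<le> max 0 y powr (a - 1) * exp (- c * y) * exp (cmod d * y)"
      using sum_le_suminf[OF sums_summable[OF exp_converges[of "cmod d * y"]], of "{..<N}"] True
        sums_unique[OF exp_converges[of "cmod d * y"]]
      by (intro mult_left_mono) (simp_all add: zero_le_mult_iff)
    finally show ?thesis
      by (simp add: exp_diff exp_minus field_simps)
  qed (simp add: f_def)
qed

lemma laplace_powr_disc:
  fixes a c :: real and d :: complex
  assumes a: "a > 0" and c: "c > 0" and d: "cmod d < c"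
  shows "integrable lborel (\<lambda>y. of_real (max 0 y powr (a - 1)) * exp (- ((of_real c + d) * of_real y)))"
    and "(LINT y|lborel. of_real (max 0 y powr (a - 1)) * exp (- ((of_real c + d) * of_real y)))
           = of_real (Gamma a) / (of_real c + d) powr of_real a"
proof -
  define f where "f n y = of_real (max 0 y powr (a + n - 1) * exp (- c * y)) * ((- d) ^ n / fact n)"
    for n :: nat and y :: real
  note series = laplace_kernel_series[where a=a and c=c and d=d, folded f_def]
  have Gamma_int: "integrable lborel (\<lambda>y. max 0 y powr (a + n - 1) * exp (- c * y))"
    and Gamma_val: "(LINT y|lborel. max 0 y powr (a + n - 1) * exp (- c * y)) = Gamma (a + n) / c powr (a + n)"
    for n :: nat using laplace_powr_real[of "a + n" c] a c by (auto simp: add_pos_nonneg)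
  have f_int: "integrable lborel (f n)" for n
    unfolding f_def by (intro integrable_mult_left integrable_of_real Gamma_int)
  have summable_pointwise: "summable (\<lambda>n. norm (f n y))" for y
    using series(2) by (intro summableI_nonneg_bounded) auto
  have summable_norm: "summable (\<lambda>n. LINT y|lborel. norm (f n y))"
  proof (rule summableI_nonneg_bounded)
    fix N
    have "(\<Sum>n<N. LINT y|lborel. norm (f n y)) = (LINT y|lborel. (\<Sum>n<N. norm (f n y)))"
      by (simp add: f_int)
    also have "\<dots> \<le> (LINT y|lborel. max 0 y powr (a - 1) * exp (- (c - cmod d) * y))"
      using laplace_powr_real(1)[of a "c - cmod d"] a d
      by (intro integral_mono series(2) Bochner_Integration.integrable_sum integrable_norm f_int) auto
    finally show "(\<Sum>n<N. LINT y|lborel. norm (f n y)) \<le> \<dots>" .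
  qed simp
  show "integrable lborel (\<lambda>y. of_real (max 0 y powr (a - 1)) * exp (- ((of_real c + d) * of_real y)))"
    using integrable_suminf[OF f_int _ summable_norm] summable_pointwise series(1) by (simp add: sums_iff)
  have series_integral: "(\<lambda>n. integral\<^sup>L lborel (f n))
      sums (LINT y|lborel. of_real (max 0 y powr (a - 1)) * exp (- ((of_real c + d) * of_real y)))"
    using sums_integral[OF f_int _ summable_norm] summable_pointwise series(1) by (simp add: sums_iff)
  have "integral\<^sup>L lborel (f n) = of_real (Gamma a * c powr (- a)) * (((- of_real a) gchoose n) * (d / of_real c) ^ n)" for n
    unfolding f_def Gamma_add_nat_eq_gbinomial[OF a c, symmetric]
    by (subst integral_mult_left_zero) (simp only: integral_complex_of_real Gamma_val)
  then have "(\<lambda>n. integral\<^sup>L lborel (f n))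
      sums (of_real (Gamma a * c powr (- a)) * (1 + d / of_real c) powr (- of_real a))"
    using c d by (simp only:) (intro sums_mult gen_binomial_complex, simp add: norm_divide)
  also have "of_real (Gamma a * c powr (- a)) * (1 + d / of_real c) powr (- of_real a)
      = of_real (Gamma a) / (of_real c + d) powr of_real a"
    using c by (simp add: complex_powr_real_split powr_minus divide_inverse)
  finally show "(LINT y|lborel. of_real (max 0 y powr (a - 1)) * exp (- ((of_real c + d) * of_real y)))
      = of_real (Gamma a) / (of_real c + d) powr of_real a"
    using series_integral sums_unique2 by metis
qed

lemma laplace_powr_complex:
  fixes a :: real and w :: complex
  assumes a: "a > 0" and w: "Re w > 0"
  shows "integrable lborel (\<lambda>y. of_real (max 0 y powr (a - 1)) * exp (- (w * of_real y)))"
    and "(LINT y|lborel. of_real (max 0 y powr (a - 1)) * exp (- (w * of_real y)))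
           = of_real (Gamma a) / w powr of_real a"
proof -
  \<comment> \<open>This choice of \<open>c\<close> puts \<open>w\<close> in the disc \<open>cmod (w - c) < c\<close>, where \<open>laplace_powr_disc\<close> applies.\<close>
  define c where "c = (cmod w)\<^sup>2 / Re w"
  have "w \<noteq> 0" using w by auto
  then have c: "c > 0" using w unfolding c_def by auto
  have c_Re: "c * Re w = (cmod w)\<^sup>2"
    using w by (simp add: c_def)
  have "(cmod (w - of_real c))\<^sup>2 = (cmod w)\<^sup>2 - 2 * (c * Re w) + c\<^sup>2"
    by (simp add: cmod_power2 power2_diff algebra_simps)
  then have "(cmod (w - of_real c))\<^sup>2 < c\<^sup>2"
    using \<open>w \<noteq> 0\<close> c_Re by simp
  then have "cmod (w - of_real c) < c"
    using c by (meson less_imp_le power_less_imp_less_base)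
  then show "integrable lborel (\<lambda>y. of_real (max 0 y powr (a - 1)) * exp (- (w * of_real y)))"
    and "(LINT y|lborel. of_real (max 0 y powr (a - 1)) * exp (- (w * of_real y)))
           = of_real (Gamma a) / w powr of_real a"
    using laplace_powr_disc[OF a c, of "w - of_real c"] by simp_all
qed

section \<open>Fourier inversion\<close>

lemma borel_measurable_Complex [measurable]: "(\<lambda>t. Complex s t) \<in> borel_measurable borel"
  by (simp add: Complex_eq)

lemma borel_measurable_Complex_powr [measurable]:
  "s > 0 \<Longrightarrow> (\<lambda>t. Complex s t powr b) \<in> borel_measurable borel"
  by (intro borel_measurable_continuous_onI continuous_on_powr_complex continuous_intros)
    (auto simp: Complex_eq complex_eq_iff)

lemma integrable_powr_atLeast_1:
  fixes b :: real assumes b: "b > 1"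
  shows "integrable lborel (\<lambda>t. indicator {1..} t * t powr (- b))"
proof -
  have "(\<lambda>t. t powr (- b)) integrable_on {1..}"
    using has_integral_powr_to_inf[of "- b" 1] b by (auto simp: integrable_on_def)
  then have "(\<lambda>t. t powr (- b)) absolutely_integrable_on {1..}"
    by (rule nonnegative_absolutely_integrable_1) auto
  then show ?thesis unfolding set_integrable_def
    by (subst (asm) integrable_completion) (auto simp: mult_ac)
qed

lemma integrable_norm_Complex_powr:
  fixes b s :: real assumes b: "b > 1" and s: "s > 0"
  shows "integrable lborel (\<lambda>t. cmod (Complex s t) powr (- b))"
proof (rule Bochner_Integration.integrable_bound)
  define D where "D t = indicator {-1..1} t * s powr (- b) + indicator {1..} t * t powr (- b)
      + indicator {1..} (- t) * (- t) powr (- b)" for t :: real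
  have tail: "integrable lborel (\<lambda>t. indicator {1..} t * t powr (- b))"
    by (rule integrable_powr_atLeast_1[OF b])
  have "integrable lborel (\<lambda>t. indicator {1..} (0 + (-1) * t) * (0 + (-1) * t) powr (- b))"
    by (rule lborel_integrable_real_affine[OF tail]) simp
  moreover have "integrable lborel (\<lambda>t::real. indicator {-1..1} t * s powr (- b) :: real)"
    by (intro integrable_mult_left integrable_real_indicator) auto
  ultimately show "integrable lborel D"
    unfolding D_def using tail by (intro Bochner_Integration.integrable_add) auto
  show "AE t in lborel. norm (cmod (Complex s t) powr (- b)) \<le> norm (D t)"
  proof (intro AE_I2)
    fix t :: real
    have "cmod (Complex s t) \<ge> s" and "cmod (Complex s t) \<ge> \<bar>t\<bar>"
      using s by (auto simp: cmod_def real_le_rsqrt)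
    moreover have "cmod (Complex s t) > 0"
      using s by (simp add: complex_eq_iff)
    ultimately have "cmod (Complex s t) powr (- b) \<le> s powr (- b)"
      and "\<bar>t\<bar> \<ge> 1 \<Longrightarrow> cmod (Complex s t) powr (- b) \<le> \<bar>t\<bar> powr (- b)"
      using s b by (auto intro!: powr_mono2')
    then have "cmod (Complex s t) powr (- b) \<le> D t"
      by (cases "\<bar>t\<bar> \<le> 1") (auto simp: D_def indicator_def)
    moreover have "0 \<le> D t" unfolding D_def by (auto simp: indicator_def)
    ultimately show "norm (cmod (Complex s t) powr (- b)) \<le> norm (D t)" by simp
  qed
qed (use s in measurable)

lemma integrable_gaussian_scaled:
  fixes N :: real assumes N: "N > 0"
  shows "integrable lborel (\<lambda>t::real. exp (- ((t / N)\<^sup>2) / 2))"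
proof -
  have "integrable lborel (\<lambda>r::real. sqrt (2 * pi) * std_normal_density r)"
    by (intro integrable_mult_right) simp
  from lborel_integrable_real_affine[OF this, of "1 / N" 0] N show ?thesis
    by (simp add: std_normal_density_def)
qed

lemma fourier_gaussian_scaled:
  fixes N u :: real assumes N: "N > 0"
  shows "(LINT t|lborel. complex_of_real (exp (- ((t / N)\<^sup>2) / 2)) * iexp (t * u))
         = complex_of_real (N * sqrt (2 * pi) * exp (- ((N * u)\<^sup>2) / 2))"
proof -
  define F where "F t = complex_of_real (exp (- ((t / N)\<^sup>2) / 2)) * iexp (t * u)" for t
  have "(LINT t|lborel. F t) = \<bar>N\<bar> *\<^sub>R (LINT r|lborel. F (0 + N * r))"
    by (rule lborel_integral_real_affine) (use N in simp)
  also have "(\<lambda>r. F (0 + N * r)) = (\<lambda>r. complex_of_real (sqrt (2 * pi)) * (std_normal_density r *\<^sub>R iexp ((N * u) * r)))"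
    using N by (auto simp: F_def std_normal_density_def scaleR_conv_of_real mult_ac)
  also have "(LINT r|lborel. complex_of_real (sqrt (2 * pi)) * (std_normal_density r *\<^sub>R iexp ((N * u) * r)))
      = complex_of_real (sqrt (2 * pi)) * (LINT r|lborel. std_normal_density r *\<^sub>R iexp ((N * u) * r))"
    by (rule integral_mult_right_zero)
  also have "(LINT r|lborel. std_normal_density r *\<^sub>R iexp ((N * u) * r)) = char std_normal_distribution (N * u)"
    unfolding char_def by (subst integral_density) auto
  also have "char std_normal_distribution (N * u) = complex_of_real (exp (- ((N * u)\<^sup>2) / 2))"
    by (simp add: char_std_normal_distribution)
  finally show ?thesis using N unfolding F_def by (simp add: scaleR_conv_of_real mult_ac)
qed

lemma power_div_fact_le_exp:
  fixes x :: real assumes "x \<ge> 0"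
  shows "x ^ m / fact m \<le> exp x"
proof -
  have "(\<Sum>n\<in>{m}. x ^ n /\<^sub>R fact n) \<le> (\<Sum>n. x ^ n /\<^sub>R fact n)"
    by (rule sum_le_suminf) (use assms sums_summable[OF exp_converges[of x]] in auto)
  then show ?thesis using sums_unique[OF exp_converges[of x]] by (simp add: divide_inverse mult_ac)
qed

lemma powr_mult_exp_neg_bounded:
  fixes a s :: real assumes a: "a \<ge> 1" and s: "s > 0"
  obtains B where "\<And>y. max 0 y powr (a - 1) * exp (- s * y) \<le> B"
proof -
  define m where "m = nat \<lceil>a - 1\<rceil>"
  have "a - 1 \<le> m"
    unfolding m_def by linarith
  have "max 0 y powr (a - 1) * exp (- s * y) \<le> 1 + fact m / s ^ m" for y
  proof (cases "y \<le> 1")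
    case True
    have "max 0 y powr (a - 1) * exp (- s * y) \<le> 1"
    proof (cases "y \<le> 0")
      case False
      then have "max 0 y powr (a - 1) * exp (- s * y) \<le> 1 * 1"
        using True a s by (intro mult_mono) (auto simp: max_def powr_le1)
      then show ?thesis by simp
    qed (simp add: max_def)
    then show ?thesis using s by (simp add: add_increasing2)
  next
    case False
    then have "max 0 y powr (a - 1) \<le> y ^ m"
      using \<open>a - 1 \<le> m\<close> by (auto simp: max_def powr_realpow[symmetric] intro!: powr_mono)
    moreover have "(s * y) ^ m / fact m \<le> exp (s * y)"
      using False s by (intro power_div_fact_le_exp) simp
    then have "y ^ m * exp (- s * y) \<le> fact m / s ^ m"
      using s False by (simp add: exp_minus field_simps)
    ultimately show ?thesis
      by (smt (verit) exp_ge_zero mult_right_mono)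
  qed
  then show ?thesis by (rule that)
qed

lemma integral_gaussian_kernel_rescale:
  fixes H :: "real \<Rightarrow> real" and N x :: real
  assumes N: "N > 0"
  shows "(LINT y|lborel. H y * (N * sqrt (2 * pi) * exp (- ((N * (x - y))\<^sup>2) / 2)))
    = 2 * pi * (LINT r|lborel. H (x - r / N) * std_normal_density r)"
proof -
  have "(LINT y|lborel. H y * (N * sqrt (2 * pi) * exp (- ((N * (x - y))\<^sup>2) / 2)))
      = \<bar>- (1 / N)\<bar> *\<^sub>R (LINT r|lborel. H (x + - (1 / N) * r)
          * (N * sqrt (2 * pi) * exp (- ((N * (x - (x + - (1 / N) * r)))\<^sup>2) / 2)))"
    by (rule lborel_integral_real_affine) (use N in simp)
  moreover have "N * (x - (x + - (1 / N) * r)) = r" for r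
    using N by (simp add: field_simps)
  ultimately show ?thesis
    using N by (simp add: std_normal_density_def field_simps real_sqrt_mult[symmetric])
qed

lemma fourier_gaussian_mollified:
  fixes H :: "real \<Rightarrow> real" and F :: "real \<Rightarrow> complex" and N x :: real
  assumes H_int: "integrable lborel H"
    and F_eq: "\<And>t. F t = (LINT y|lborel. complex_of_real (H y) * iexp (- (t * y)))"
    and N: "N > 0"
  shows "(LINT t|lborel. F t * iexp (t * x) * complex_of_real (exp (- ((t / N)\<^sup>2) / 2)))
    = complex_of_real (2 * pi * (LINT r|lborel. H (x - r / N) * std_normal_density r))"
proof -
  have [measurable]: "H \<in> borel_measurable borel"
    using H_int by simp
  define g where "g t = exp (- ((t / N)\<^sup>2) / 2)" for t
  define G where "G t y = complex_of_real (H y * g t) * iexp (t * (x - y))" for t y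
  have G_int: "integrable (lborel \<Otimes>\<^sub>M lborel) (\<lambda>(t, y). G t y)"
  proof (rule lborel_pair.Fubini_integrable)
    have "(\<lambda>t. LINT y|lborel. norm (G t y)) = (\<lambda>t. g t * (LINT y|lborel. \<bar>H y\<bar>))"
      by (auto simp: G_def g_def norm_mult abs_mult mult_ac)
    then show "integrable lborel (\<lambda>t. LINT y|lborel. norm (case (t, y) of (t, y) \<Rightarrow> G t y))"
      using integrable_gaussian_scaled[OF N] by (simp add: g_def)
    show "AE t in lborel. integrable lborel (\<lambda>y. case (t, y) of (t, y) \<Rightarrow> G t y)"
    proof (intro AE_I2)
      fix t
      show "integrable lborel (\<lambda>y. case (t, y) of (t, y) \<Rightarrow> G t y)"
      proof (rule Bochner_Integration.integrable_bound)
        show "integrable lborel (\<lambda>y. \<bar>H y\<bar> * g t)" using H_int by simp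
      qed (auto simp: G_def g_def norm_mult abs_mult)
    qed
  qed (simp add: G_def g_def)
  have inner_y: "(LINT y|lborel. G t y) = F t * iexp (t * x) * complex_of_real (g t)" for t
  proof -
    have "(\<lambda>y. G t y) = (\<lambda>y. (iexp (t * x) * complex_of_real (g t)) * (complex_of_real (H y) * iexp (- (t * y))))"
      by (simp add: G_def exp_add[symmetric] algebra_simps)
    then have "(LINT y|lborel. G t y) = (iexp (t * x) * complex_of_real (g t)) * (LINT y|lborel. complex_of_real (H y) * iexp (- (t * y)))"
      by (simp only: integral_mult_right_zero)
    then show ?thesis
      by (simp add: F_eq mult_ac)
  qed
  have inner_t: "(LINT t|lborel. G t y) = complex_of_real (H y * (N * sqrt (2 * pi) * exp (- ((N * (x - y))\<^sup>2) / 2)))" for y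
  proof -
    have "(\<lambda>t. G t y) = (\<lambda>t. complex_of_real (H y) * (complex_of_real (g t) * iexp (t * (x - y))))"
      by (auto simp: G_def mult_ac)
    then show ?thesis
      using fourier_gaussian_scaled[OF N, of "x - y"] by (simp add: g_def)
  qed
  have "(LINT t|lborel. F t * iexp (t * x) * complex_of_real (g t))
      = (LINT y|lborel. complex_of_real (H y * (N * sqrt (2 * pi) * exp (- ((N * (x - y))\<^sup>2) / 2))))"
    using lborel_pair.Fubini_integral[OF G_int] by (simp add: inner_y inner_t)
  also have "\<dots> = complex_of_real (LINT y|lborel. H y * (N * sqrt (2 * pi) * exp (- ((N * (x - y))\<^sup>2) / 2)))"
    by (rule integral_complex_of_real)
  also have "\<dots> = complex_of_real (2 * pi * (LINT r|lborel. H (x - r / N) * std_normal_density r))"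
    unfolding integral_gaussian_kernel_rescale[OF N] ..
  finally show ?thesis
    by (simp add: g_def)
qed

lemma fourier_inversion_at_continuity_point:
  fixes H :: "real \<Rightarrow> real" and F :: "real \<Rightarrow> complex" and x B :: real
  assumes H_int: "integrable lborel H" and H_bounded: "\<And>y. \<bar>H y\<bar> \<le> B" and H_cont: "isCont H x"
    and F_int: "integrable lborel F"
    and F_eq: "\<And>t. F t = (LINT y|lborel. complex_of_real (H y) * iexp (- (t * y)))"
  shows "(LINT t|lborel. F t * iexp (t * x)) = complex_of_real (2 * pi * H x)"
proof -
  have [measurable]: "H \<in> borel_measurable borel" "F \<in> borel_measurable borel"
    using H_int F_int by simp_all
  define N where "N n = real (Suc n)" for n
  have N: "N n > 0" for n
    by (simp add: N_def)
  have "(\<lambda>n. t / N n) \<longlonglongrightarrow> 0" for t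
    unfolding N_def divide_inverse by (intro tendsto_mult_right_zero LIMSEQ_inverse_real_of_nat)
  then have "(\<lambda>n. LINT t|lborel. F t * iexp (t * x) * complex_of_real (exp (- ((t / N n)\<^sup>2) / 2)))
      \<longlonglongrightarrow> (LINT t|lborel. F t * iexp (t * x) * complex_of_real (exp (- (0\<^sup>2) / 2)))"
    by (intro integral_dominated_convergence[where w="\<lambda>t. norm (F t)"] AE_I2 tendsto_intros)
      (auto simp: F_int norm_mult intro!: mult_left_le)
  then have "(\<lambda>n. complex_of_real (2 * pi * (LINT r|lborel. H (x - r / N n) * std_normal_density r)))
      \<longlonglongrightarrow> (LINT t|lborel. F t * iexp (t * x) * complex_of_real (exp (- (0\<^sup>2) / 2)))"
    unfolding fourier_gaussian_mollified[OF H_int F_eq N] .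
  then have lim_fourier: "(\<lambda>n. complex_of_real (2 * pi * (LINT r|lborel. H (x - r / N n) * std_normal_density r)))
      \<longlonglongrightarrow> (LINT t|lborel. F t * iexp (t * x))"
    by simp
  have "(\<lambda>n. x - r / N n) \<longlonglongrightarrow> x" for r
    using tendsto_diff[OF tendsto_const \<open>(\<lambda>n. r / N n) \<longlonglongrightarrow> 0\<close>] by simp
  then have "(\<lambda>n. LINT r|lborel. H (x - r / N n) * std_normal_density r)
      \<longlonglongrightarrow> (LINT r|lborel. H x * std_normal_density r)"
    using H_bounded
    by (intro integral_dominated_convergence[where w="\<lambda>r. B * std_normal_density r"] AE_I2
        tendsto_intros isCont_tendsto_compose[OF H_cont])
      (auto simp: abs_mult intro!: mult_right_mono)
  then have "(\<lambda>n. complex_of_real (2 * pi * (LINT r|lborel. H (x - r / N n) * std_normal_density r)))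
      \<longlonglongrightarrow> complex_of_real (2 * pi * H x)"
    by (intro tendsto_intros) simp
  with lim_fourier show ?thesis
    by (rule LIMSEQ_unique)
qed

lemma inversion_exp_div_powr:
  fixes s a x :: real assumes s: "s > 0" and a: "a > 1"
  shows "integrable lborel (\<lambda>t. exp (Complex s t * complex_of_real x) / Complex s t powr complex_of_real a)"
    and "(LINT t|lborel. exp (Complex s t * complex_of_real x) / Complex s t powr complex_of_real a)
          = complex_of_real (2 * pi * max 0 x powr (a - 1) / Gamma a)"
proof -
  define H where "H y = max 0 y powr (a - 1) * exp (- s * y)" for y
  obtain B where H_bounded: "\<And>y. \<bar>H y\<bar> \<le> B"
    using powr_mult_exp_neg_bounded[of a s] a s unfolding H_def
    by (metis abs_of_nonneg less_imp_le mult_nonneg_nonneg exp_ge_zero powr_ge_zero)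
  have H_int: "integrable lborel H"
    unfolding H_def using laplace_powr_real(1)[of a s] a s by simp
  have H_cont: "isCont H x"
    unfolding H_def isCont_def using a by (intro tendsto_intros) auto
  have Gamma_a: "Gamma a > 0" using a by (intro Gamma_real_pos) simp
  define F where "F t = complex_of_real (Gamma a) / Complex s t powr complex_of_real a" for t
  have F_eq: "F t = (LINT y|lborel. complex_of_real (H y) * iexp (- (t * y)))" for t
  proof -
    have "exp (- (Complex s t * complex_of_real y)) = complex_of_real (exp (- s * y)) * iexp (- (t * y))" for y
      by (simp add: Complex_eq exp_of_real[symmetric] exp_add[symmetric] algebra_simps)
    then show ?thesis
      using laplace_powr_complex(2)[of a "Complex s t"] a s by (simp add: F_def H_def mult_ac)
  qed
  have F_int: "integrable lborel F"
  proof (rule Bochner_Integration.integrable_bound)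
    show "integrable lborel (\<lambda>t. Gamma a * cmod (Complex s t) powr (- a))"
      using integrable_norm_Complex_powr[OF a s] by simp
    show "AE t in lborel. norm (F t) \<le> norm (Gamma a * cmod (Complex s t) powr (- a))"
      using Gamma_a s by (auto simp: F_def norm_divide norm_mult norm_inverse norm_powr_real_powr' powr_minus divide_inverse)
  qed (use s in \<open>unfold F_def, measurable\<close>)
  have exp_split: "exp (Complex s t * complex_of_real x) / Complex s t powr complex_of_real a
      = complex_of_real (exp (s * x) / Gamma a) * (F t * iexp (t * x))" for t
    using Gamma_a s by (simp add: F_def Complex_eq exp_of_real[symmetric] exp_add[symmetric] algebra_simps)
  have [measurable]: "F \<in> borel_measurable borel"
    using F_int by simp
  have "integrable lborel (\<lambda>t. F t * iexp (t * x))"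
    by (rule Bochner_Integration.integrable_bound[OF integrable_norm[OF F_int]]) (auto simp: norm_mult)
  then show "integrable lborel (\<lambda>t. exp (Complex s t * complex_of_real x) / Complex s t powr complex_of_real a)"
    unfolding exp_split by simp
  show "(LINT t|lborel. exp (Complex s t * complex_of_real x) / Complex s t powr complex_of_real a)
          = complex_of_real (2 * pi * max 0 x powr (a - 1) / Gamma a)"
    unfolding exp_split integral_mult_right_zero
      fourier_inversion_at_continuity_point[OF H_int H_bounded H_cont F_int F_eq]
    using Gamma_a by (simp add: H_def exp_minus field_simps)
qed

section \<open>Truncated exponentials\<close>

lemma of_nat_less_of_le_ceiling_minus_one:
  fixes p :: real and j :: int
  assumes "j \<le> \<lceil>p - 1\<rceil>" and "k < nat (j + 1)"
  shows "real k < p"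
  using assms ceiling_correct[of "p - 1"] by linarith

lemma power_div_powr_of_real:
  fixes z :: complex assumes "z \<noteq> 0"
  shows "z ^ k / z powr of_real q = 1 / z powr of_real (q - real k)"
  using assms by (simp add: powr_diff powr_nat' field_simps)

lemma inversion_exp_trunc_div_powr:
  fixes s p x :: real and j :: int
  assumes s: "s > 0" and p: "p > 0" and j: "j \<le> \<lceil>p - 1\<rceil>"
  shows "integrable lborel (\<lambda>t. exp_trunc j (Complex s t * of_real x) / Complex s t powr of_real (p + 1))"
    and "(LINT t|lborel. exp_trunc j (Complex s t * of_real x) / Complex s t powr of_real (p + 1))
          = complex_of_real (2 * pi * max 0 x powr p / Gamma (p + 1))"
proof -
  define A where "A t = exp (Complex s t * of_real x) / Complex s t powr of_real (p + 1)" for t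
  \<comment> \<open>The \<open>k\<close>-th Taylor term, written as the instance \<open>x = 0\<close> of \<open>inversion_exp_div_powr\<close>.\<close>
  define C where "C k t = of_real (x ^ k / fact k)
      * (exp (Complex s t * of_real 0) / Complex s t powr of_real (p + 1 - real k))" for k t
  have "(Complex s t * of_real x) ^ k / fact k / Complex s t powr of_real (p + 1) = C k t" for t k
  proof -
    have "Complex s t \<noteq> 0"
      using s by (simp add: complex_eq_iff)
    have "(Complex s t * of_real x) ^ k / fact k / Complex s t powr of_real (p + 1)
        = of_real (x ^ k / fact k) * (Complex s t ^ k / Complex s t powr of_real (p + 1))"
      by (simp add: power_mult_distrib)
    also have "Complex s t ^ k / Complex s t powr of_real (p + 1) = 1 / Complex s t powr of_real (p + 1 - real k)"
      using \<open>Complex s t \<noteq> 0\<close> by (rule power_div_powr_of_real)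
    finally show ?thesis
      by (simp add: C_def)
  qed
  then have trunc_eq: "exp_trunc j (Complex s t * of_real x) / Complex s t powr of_real (p + 1)
      = A t - (\<Sum>k<nat (j + 1). C k t)" for t
    by (simp add: exp_trunc_def A_def diff_divide_distrib sum_divide_distrib)
  have "p + 1 - real k > 1" if "k < nat (j + 1)" for k
    using of_nat_less_of_le_ceiling_minus_one[OF j that] by simp
  note inversion = inversion_exp_div_powr[OF s this]
  have A_int: "integrable lborel A" and A_val: "integral\<^sup>L lborel A = of_real (2 * pi * max 0 x powr p / Gamma (p + 1))"
    using inversion_exp_div_powr[OF s, of "p + 1" x] p by (simp_all add: A_def[abs_def])
  have C_int: "integrable lborel (C k)" if "k < nat (j + 1)" for k
    unfolding C_def by (rule integrable_mult_right, rule inversion(1)[OF that])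
  have C_val: "integral\<^sup>L lborel (C k) = 0" if "k < nat (j + 1)" for k
    unfolding C_def integral_mult_right_zero inversion(2)[OF that] by simp
  have sum_int: "integrable lborel (\<lambda>t. \<Sum>k<nat (j + 1). C k t)"
    using C_int by auto
  have sum_val: "(LINT t|lborel. (\<Sum>k<nat (j + 1). C k t)) = 0"
    using C_int C_val by (subst Bochner_Integration.integral_sum) auto
  show "integrable lborel (\<lambda>t. exp_trunc j (Complex s t * of_real x) / Complex s t powr of_real (p + 1))"
    and "(LINT t|lborel. exp_trunc j (Complex s t * of_real x) / Complex s t powr of_real (p + 1))
          = complex_of_real (2 * pi * max 0 x powr p / Gamma (p + 1))"
    unfolding trunc_eq using A_int A_val sum_int sum_val by simp_all
qed

lemma norm_exp_trunc_le:
  fixes z :: complex and x :: real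
  shows "norm (exp_trunc j (z * of_real x))
     \<le> exp (Re z * x) + (\<Sum>k<nat (j + 1). cmod z ^ k * (\<bar>x\<bar> ^ k / fact k))"
proof -
  have "norm (exp_trunc j (z * of_real x))
      \<le> norm (exp (z * of_real x)) + norm (\<Sum>k<nat (j + 1). (z * of_real x) ^ k / fact k)"
    unfolding exp_trunc_def of_nat_fact by (rule norm_triangle_ineq4)
  also have "norm (\<Sum>k<nat (j + 1). (z * of_real x) ^ k / fact k)
      \<le> (\<Sum>k<nat (j + 1). norm ((z * of_real x) ^ k / fact k))"
    by (rule norm_sum)
  finally show ?thesis
    by (simp add: norm_mult norm_divide norm_power power_mult_distrib)
qed

lemma norm_exp_trunc_div_powr_le:
  fixes z :: complex and x q :: real
  assumes "z \<noteq> 0"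
  shows "norm (exp_trunc j (z * of_real x) / z powr of_real q)
    \<le> exp (Re z * x) * cmod z powr (- q)
      + (\<Sum>k<nat (j + 1). \<bar>x\<bar> ^ k / fact k * cmod z powr (real k - q))"
proof -
  have z: "cmod z > 0" using assms by simp
  have "norm (exp_trunc j (z * of_real x) / z powr of_real q)
      \<le> (exp (Re z * x) + (\<Sum>k<nat (j + 1). cmod z ^ k * (\<bar>x\<bar> ^ k / fact k))) / cmod z powr q"
    unfolding norm_divide using norm_exp_trunc_le[of j z x]
    by (simp add: norm_powr_real_powr' divide_right_mono)
  also have "\<dots> = exp (Re z * x) * cmod z powr (- q)
      + (\<Sum>k<nat (j + 1). \<bar>x\<bar> ^ k / fact k * (cmod z powr real k / cmod z powr q))"
    using z by (simp add: powr_minus powr_realpow divide_inverse distrib_left sum_distrib_left mult_ac)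
  finally show ?thesis
    by (simp add: powr_diff)
qed

lemma exp_trunc_cnj: "cnj (exp_trunc m w) = exp_trunc m (cnj w)"
  unfolding exp_trunc_def by (simp add: exp_cnj)

section \<open>Integrals over the half-line\<close>

lemma lborel_integral_even:
  fixes g :: "real \<Rightarrow> real"
  assumes g_int: "integrable lborel g" and even: "\<And>t. g (- t) = g t"
  shows "set_integrable lborel {0..} g"
    and "integral\<^sup>L lborel g = 2 * (LBINT t:{0..}. g t)"
proof -
  have [measurable]: "g \<in> borel_measurable borel"
    using g_int by simp
  define h where "h t = g t * indicator {0..} t" for t
  have h_int: "integrable lborel h"
    unfolding h_def using g_int by (intro integrable_real_mult_indicator) simp_all
  then show "set_integrable lborel {0..} g"
    unfolding h_def by (simp add: set_integrable_def mult_ac)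
  have "AE t in lborel. g t = h t + h (0 + (-1) * t)"
    using AE_lborel_singleton[of 0]
    by eventually_elim (use even in \<open>auto simp: h_def indicator_def\<close>)
  then have "integral\<^sup>L lborel g = (LINT t|lborel. h t + h (0 + (-1) * t))"
    by (intro integral_cong_AE) (auto simp: h_def)
  also have "\<dots> = 2 * integral\<^sup>L lborel h"
    using h_int lborel_integrable_real_affine[OF h_int, of "-1" 0]
      lborel_integral_real_affine[of "-1" h 0]
    by simp
  finally show "integral\<^sup>L lborel g = 2 * (LBINT t:{0..}. g t)"
    by (simp add: set_lebesgue_integral_def h_def[abs_def] mult_ac)
qed

lemma lborel_integral_cnj_symmetric:
  fixes F :: "real \<Rightarrow> complex"
  assumes F_int: "integrable lborel F" and sym: "\<And>t. F (- t) = cnj (F t)"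
  shows "set_integrable lborel {0..} (\<lambda>t. Re (F t))"
    and "integral\<^sup>L lborel F = complex_of_real (2 * (LBINT t:{0..}. Re (F t)))"
proof -
  have "integral\<^sup>L lborel F = (LINT t|lborel. F (0 + (-1) * t))"
    using lborel_integral_real_affine[of "-1" F 0] by simp
  also have "\<dots> = cnj (integral\<^sup>L lborel F)"
    by (simp add: sym)
  finally have "integral\<^sup>L lborel F = complex_of_real (LINT t|lborel. Re (F t))"
    using F_int by (simp add: complex_eq_iff)
  moreover have "Re (F (- t)) = Re (F t)" for t
    by (simp add: sym)
  note even = lborel_integral_even[OF integrable_Re[OF F_int] this]
  ultimately show "set_integrable lborel {0..} (\<lambda>t. Re (F t))"
    and "integral\<^sup>L lborel F = complex_of_real (2 * (LBINT t:{0..}. Re (F t)))"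
    by simp_all
qed

section \<open>Exchanging expectation and integral\<close>

lemma integrable_abs_power_mono:
  fixes X :: "'a \<Rightarrow> real"
  assumes "finite_measure M" and [measurable]: "X \<in> borel_measurable M"
    and X_int: "integrable M (\<lambda>\<omega>. \<bar>X \<omega>\<bar> ^ n)" and "k \<le> n"
  shows "integrable M (\<lambda>\<omega>. \<bar>X \<omega>\<bar> ^ k)"
proof (rule Bochner_Integration.integrable_bound)
  interpret finite_measure M by fact
  show "integrable M (\<lambda>\<omega>. 1 + \<bar>X \<omega>\<bar> ^ n)"
    using X_int by simp
  have "\<bar>x\<bar> ^ k \<le> 1 + \<bar>x\<bar> ^ n" for x :: real
  proof (cases "\<bar>x\<bar> \<le> 1")
    case True
    then have "\<bar>x\<bar> ^ k \<le> 1" by (simp add: power_le_one)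
    then show ?thesis by (simp add: add_increasing2)
  next
    case False
    then have "\<bar>x\<bar> ^ k \<le> \<bar>x\<bar> ^ n"
      using \<open>k \<le> n\<close> by (intro power_increasing) auto
    then show ?thesis by simp
  qed
  then show "AE \<omega> in M. norm (\<bar>X \<omega>\<bar> ^ k) \<le> norm (1 + \<bar>X \<omega>\<bar> ^ n)"
    by (simp add: add_increasing)
qed measurable

lemma integrable_exp_trunc:
  fixes X :: "'a \<Rightarrow> real"
  assumes [measurable]: "X \<in> borel_measurable M"
    and exp_int: "integrable M (\<lambda>\<omega>. exp (s * X \<omega>))"
    and moments: "\<And>k. k < nat (j + 1) \<Longrightarrow> integrable M (\<lambda>\<omega>. \<bar>X \<omega>\<bar> ^ k)"
  shows "integrable M (\<lambda>\<omega>. exp_trunc j (Complex s t * of_real (X \<omega>)))"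
proof (rule Bochner_Integration.integrable_bound)
  show "integrable M (\<lambda>\<omega>. exp (s * X \<omega>) + (\<Sum>k<nat (j + 1). cmod (Complex s t) ^ k * (\<bar>X \<omega>\<bar> ^ k / fact k)))"
    using exp_int moments by (intro Bochner_Integration.integrable_add Bochner_Integration.integrable_sum
        integrable_mult_right integrable_divide) auto
  show "AE \<omega> in M. norm (exp_trunc j (Complex s t * of_real (X \<omega>)))
      \<le> norm (exp (s * X \<omega>) + (\<Sum>k<nat (j + 1). cmod (Complex s t) ^ k * (\<bar>X \<omega>\<bar> ^ k / fact k)))"
    using norm_exp_trunc_le[of j "Complex s t"] by (auto intro!: add_nonneg_nonneg sum_nonneg order.trans[OF _ abs_ge_self])
qed (simp add: exp_trunc_def)

lemma integral_norm_exp_trunc_div_powr_le: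
  fixes s p x :: real and j :: int
  assumes s: "s > 0" and p: "p > 0" and j: "j \<le> \<lceil>p - 1\<rceil>"
  shows "(LINT t|lborel. norm (exp_trunc j (Complex s t * of_real x) / Complex s t powr of_real (p + 1)))
    \<le> exp (s * x) * (LINT t|lborel. cmod (Complex s t) powr (- (p + 1)))
      + (\<Sum>k<nat (j + 1). \<bar>x\<bar> ^ k / fact k * (LINT t|lborel. cmod (Complex s t) powr (- (p + 1 - real k))))"
proof -
  have "p + 1 - real k > 1" if "k < nat (j + 1)" for k
    using of_nat_less_of_le_ceiling_minus_one[OF j that] by simp
  note powr_int = integrable_norm_Complex_powr[OF this s] integrable_norm_Complex_powr[of "p + 1", OF _ s]
  define bound where "bound t = exp (s * x) * cmod (Complex s t) powr (- (p + 1))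
      + (\<Sum>k<nat (j + 1). \<bar>x\<bar> ^ k / fact k * cmod (Complex s t) powr (- (p + 1 - real k)))" for t
  have "(LINT t|lborel. norm (exp_trunc j (Complex s t * of_real x) / Complex s t powr of_real (p + 1)))
      \<le> (LINT t|lborel. bound t)"
  proof (intro integral_mono)
    show "integrable lborel bound"
      unfolding bound_def using p powr_int
      by (intro Bochner_Integration.integrable_add Bochner_Integration.integrable_sum integrable_mult_right) auto
    show "norm (exp_trunc j (Complex s t * of_real x) / Complex s t powr of_real (p + 1)) \<le> bound t" for t
      using norm_exp_trunc_div_powr_le[of "Complex s t" j x "p + 1"] s
      by (simp add: bound_def complex_eq_iff)
  qed (use inversion_exp_trunc_div_powr(1)[OF s p j] in simp)
  also have "\<dots> = exp (s * x) * (LINT t|lborel. cmod (Complex s t) powr (- (p + 1)))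
      + (\<Sum>k<nat (j + 1). \<bar>x\<bar> ^ k / fact k * (LINT t|lborel. cmod (Complex s t) powr (- (p + 1 - real k))))"
    unfolding bound_def using p powr_int
    by (subst Bochner_Integration.integral_add) (auto simp: Bochner_Integration.integral_sum)
  finally show ?thesis .
qed

lemma integrable_exp_trunc_div_powr_pair:
  fixes X :: "'a \<Rightarrow> real" and s p :: real and j :: int
  assumes "sigma_finite_measure M" and [measurable]: "X \<in> borel_measurable M"
    and exp_int: "integrable M (\<lambda>\<omega>. exp (s * X \<omega>))"
    and moments: "\<And>k. k < nat (j + 1) \<Longrightarrow> integrable M (\<lambda>\<omega>. \<bar>X \<omega>\<bar> ^ k)"
    and s: "s > 0" and p: "p > 0" and j: "j \<le> \<lceil>p - 1\<rceil>"
  shows "integrable (M \<Otimes>\<^sub>M lborel)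
    (\<lambda>(\<omega>, t). exp_trunc j (Complex s t * of_real (X \<omega>)) / Complex s t powr of_real (p + 1))"
proof -
  interpret pair_sigma_finite M lborel
    using assms(1) by (simp add: pair_sigma_finite_def lborel.sigma_finite_measure_axioms)
  define C where "C q = (LINT t|lborel. cmod (Complex s t) powr (- q))" for q
  show ?thesis
  proof (rule Fubini_integrable)
    show "integrable M (\<lambda>\<omega>. LINT t|lborel. norm (case (\<omega>, t) of (\<omega>, t) \<Rightarrow>
        exp_trunc j (Complex s t * of_real (X \<omega>)) / Complex s t powr of_real (p + 1)))"
    proof (rule Bochner_Integration.integrable_bound)
      show "integrable M (\<lambda>\<omega>. exp (s * X \<omega>) * C (p + 1) + (\<Sum>k<nat (j + 1). \<bar>X \<omega>\<bar> ^ k / fact k * C (p + 1 - real k)))"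
        using exp_int moments by (intro Bochner_Integration.integrable_add Bochner_Integration.integrable_sum
            integrable_mult_left integrable_divide) auto
      show "AE \<omega> in M. norm (LINT t|lborel. norm (case (\<omega>, t) of (\<omega>, t) \<Rightarrow>
          exp_trunc j (Complex s t * of_real (X \<omega>)) / Complex s t powr of_real (p + 1)))
          \<le> norm (exp (s * X \<omega>) * C (p + 1) + (\<Sum>k<nat (j + 1). \<bar>X \<omega>\<bar> ^ k / fact k * C (p + 1 - real k)))"
        using integral_norm_exp_trunc_div_powr_le[OF s p j]
        by (auto simp: C_def intro!: order.trans[OF _ abs_ge_self])
    qed (use s in \<open>unfold exp_trunc_def, measurable\<close>)
    show "AE \<omega> in M. integrable lborel (\<lambda>t. case (\<omega>, t) of (\<omega>, t) \<Rightarrow>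
        exp_trunc j (Complex s t * of_real (X \<omega>)) / Complex s t powr of_real (p + 1))"
      using inversion_exp_trunc_div_powr(1)[OF s p j] by simp
  qed (use s in \<open>unfold exp_trunc_def, measurable\<close>)
qed

definition inversion_integrand :: "'a measure \<Rightarrow> ('a \<Rightarrow> real) \<Rightarrow> int \<Rightarrow> real \<Rightarrow> real \<Rightarrow> real \<Rightarrow> complex"
  where "inversion_integrand M X j p s t =
    (LINT \<omega>|M. exp_trunc j (Complex s t * of_real (X \<omega>))) / Complex s t powr of_real (p + 1)"

lemma inversion_integrand_uminus:
  assumes "s > 0"
  shows "inversion_integrand M X j p s (- t) = cnj (inversion_integrand M X j p s t)"
proof -
  have "cnj (Complex s t) = Complex s (- t)"
    by (simp add: complex_eq_iff)
  then show ?thesis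
    using assms by (simp add: inversion_integrand_def exp_trunc_cnj cnj_powr
        flip: Bochner_Integration.integral_cnj)
qed

lemma inversion_integrand_full_line:
  fixes X :: "'a \<Rightarrow> real" and s p :: real and j :: int
  assumes "sigma_finite_measure M" and [measurable]: "X \<in> borel_measurable M"
    and exp_int: "integrable M (\<lambda>\<omega>. exp (s * X \<omega>))"
    and moments: "\<And>k. k < nat (j + 1) \<Longrightarrow> integrable M (\<lambda>\<omega>. \<bar>X \<omega>\<bar> ^ k)"
    and s: "s > 0" and p: "p > 0" and j: "j \<le> \<lceil>p - 1\<rceil>"
  shows "integrable M (\<lambda>\<omega>. max 0 (X \<omega>) powr p)"
    and "integrable lborel (inversion_integrand M X j p s)"
    and "(LINT t|lborel. inversion_integrand M X j p s t)
      = complex_of_real (2 * pi / Gamma (p + 1) * (LINT \<omega>|M. max 0 (X \<omega>) powr p))"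
proof -
  interpret pair_sigma_finite M lborel
    using assms(1) by (simp add: pair_sigma_finite_def lborel.sigma_finite_measure_axioms)
  note F_int = integrable_exp_trunc_div_powr_pair[OF assms(1,2) exp_int moments s p j]
  have integrand_eq: "inversion_integrand M X j p s
      = (\<lambda>t. LINT \<omega>|M. exp_trunc j (Complex s t * of_real (X \<omega>)) / Complex s t powr of_real (p + 1))"
    by (simp add: inversion_integrand_def fun_eq_iff)
  show "integrable lborel (inversion_integrand M X j p s)"
    unfolding integrand_eq using integrable_snd[OF F_int] by simp
  have pointwise: "(LINT t|lborel. exp_trunc j (Complex s t * of_real (X \<omega>)) / Complex s t powr of_real (p + 1))
      = complex_of_real (2 * pi / Gamma (p + 1) * max 0 (X \<omega>) powr p)" for \<omega>
    using inversion_exp_trunc_div_powr(2)[OF s p j] by simp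
  have "integrable M (\<lambda>\<omega>. LINT t|lborel. exp_trunc j (Complex s t * of_real (X \<omega>)) / Complex s t powr of_real (p + 1))"
    using integrable_fst[OF F_int] by simp
  then have "integrable M (\<lambda>\<omega>. 2 * pi / Gamma (p + 1) * max 0 (X \<omega>) powr p)"
    unfolding pointwise complex_of_real_integrable_eq .
  moreover have "Gamma (p + 1) > 0"
    using p by (intro Gamma_real_pos) simp
  ultimately show "integrable M (\<lambda>\<omega>. max 0 (X \<omega>) powr p)"
    by (subst (asm) integrable_mult_left_iff) simp
  have "(LINT t|lborel. inversion_integrand M X j p s t)
      = (LINT \<omega>|M. LINT t|lborel. exp_trunc j (Complex s t * of_real (X \<omega>)) / Complex s t powr of_real (p + 1))"
    unfolding integrand_eq using Fubini_integral[OF F_int] by simp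
  also have "\<dots> = complex_of_real (2 * pi / Gamma (p + 1) * (LINT \<omega>|M. max 0 (X \<omega>) powr p))"
    by (simp only: pointwise integral_complex_of_real integral_mult_right_zero)
  finally show "(LINT t|lborel. inversion_integrand M X j p s t)
      = complex_of_real (2 * pi / Gamma (p + 1) * (LINT \<omega>|M. max 0 (X \<omega>) powr p))" .
qed

theorem theorem2p1:
  fixes M :: "'a measure" and X :: "'a \<Rightarrow> real"
    and s1 s2 p s :: real and j :: int
  assumes "prob_space M"
    and "X \<in> borel_measurable M"
    and "s1 \<le> 0" and "0 \<le> s2"
    and "\<And>u. u \<in> {s1..s2} \<Longrightarrow> integrable M (\<lambda>\<omega>. exp (u * X \<omega>))"
    and "p > 0"
    and "s \<in> {0<..s2}"
    and "-1 \<le> j" and "j \<le> \<lceil>p - 1\<rceil>"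
    and "integrable M (\<lambda>\<omega>. \<bar>X \<omega>\<bar> ^ nat j)"
  shows "integrable M (\<lambda>\<omega>. max 0 (X \<omega>) powr p)
    \<and> (\<forall>t::real. integrable M (\<lambda>\<omega>. exp_trunc j (Complex s t * of_real (X \<omega>))))
    \<and> integrable lborel (\<lambda>t::real.
         (LINT \<omega>|M. exp_trunc j (Complex s t * of_real (X \<omega>))) / (Complex s t) powr (of_real (p + 1)))
    \<and> set_integrable lborel {0..} (\<lambda>t::real.
         Re ((LINT \<omega>|M. exp_trunc j (Complex s t * of_real (X \<omega>))) / (Complex s t) powr (of_real (p + 1))))
    \<and> complex_of_real (LINT \<omega>|M. max 0 (X \<omega>) powr p)
        = of_real (Gamma (p + 1) / (2 * pi)) * (LINT t|lborel.
         (LINT \<omega>|M. exp_trunc j (Complex s t * of_real (X \<omega>))) / (Complex s t) powr (of_real (p + 1)))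
    \<and> (LINT \<omega>|M. max 0 (X \<omega>) powr p)
        = Gamma (p + 1) / pi * (LBINT t:{0..}.
         Re ((LINT \<omega>|M. exp_trunc j (Complex s t * of_real (X \<omega>))) / (Complex s t) powr (of_real (p + 1))))"
proof -
  interpret prob_space M by fact
  have s: "s > 0" and exp_int: "integrable M (\<lambda>\<omega>. exp (s * X \<omega>))"
    using assms(3,5,7) by auto
  have moments: "integrable M (\<lambda>\<omega>. \<bar>X \<omega>\<bar> ^ k)" if "k < nat (j + 1)" for k
    using integrable_abs_power_mono[OF finite_measure_axioms assms(2,10)] that by simp
  note full_line = inversion_integrand_full_line[OF prob_space_imp_sigma_finite[OF assms(1)] assms(2)
      exp_int moments s assms(6,9)]
  note half_line = lborel_integral_cnj_symmetric[where F="inversion_integrand M X j p s",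
      OF full_line(2) inversion_integrand_uminus[OF s]]
  have "Gamma (p + 1) > 0"
    using assms(6) by (intro Gamma_real_pos) simp
  then have full_line_eq: "complex_of_real (LINT \<omega>|M. max 0 (X \<omega>) powr p)
      = of_real (Gamma (p + 1) / (2 * pi)) * (LINT t|lborel. inversion_integrand M X j p s t)"
    by (simp add: full_line(3))
  moreover have "(LINT \<omega>|M. max 0 (X \<omega>) powr p)
      = Gamma (p + 1) / pi * (LBINT t:{0..}. Re (inversion_integrand M X j p s t))"
    using full_line_eq by (subst of_real_eq_iff[symmetric, where 'a=complex]) (simp add: half_line(2))
  ultimately show ?thesis
    unfolding inversion_integrand_def[symmetric]
    using full_line(1,2) integrable_exp_trunc[OF assms(2) exp_int moments] half_line(1)
    by blast
qed

end
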